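(* Let $d/2<k<d$ be integers with $4k-d-2>(2k-d)^2$, and let $H_*$ be the Hessian matrix of $\varphi$ at $\mathbf b^*$. Then $$\det(-H_* )=\frac{2k^2}{(d-1)(2k-d)^2}\big(4k-d-2-(2k-d)^2\big)\prod_{i=0}^{d-k}\frac1{b_i^*}>0.$$ Furthermore, if $\mathbf b^*$ is the unique global maximum of $\varphi$ on $K$, then $H_*$ is negative definite.
   Context: $\chi_i=\frac{d!}{(k-i)!\,(d-k-i)!\,(i!)^2}$ for $i=0,\dots,d-k$; $b_i^*=(\frac d{2k})^2\binom dk^{-2}\chi_i$. For $\mathbf b\in\mathbb{R}^{d-k+1}$, $\beta_{\mathbf b}=\sum_i b_i$, $\gamma_{\mathbf b}=\sum_i(k-i)b_i$; $K=\{\mathbf b: \frac{d-k}{k}\le\beta_{\mathbf b}\le\frac d{2k},\ b_i\ge0\}$; with $g(x)=x\log x$ ($g(0)=0$), $\varphi(\mathbf b)=g(\gamma_{\mathbf b})+g(d/2-\gamma_{\mathbf b})-2g(\frac{d}{2k}-\beta_{\mathbf b})-g(1-\frac dk+\beta_{\mathbf b})-2\beta_{\mathbf b}\log\binom dk+\sum_i b_i\log\chi_i-\sum_i g(b_i)$. *)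

theory Defs
  imports "Jordan_Normal_Form.Determinant"
begin

text \<open>Vectors b in R^(d-k+1) are represented as functions nat => real; only the
coordinates 0..d-k matter (the set K below additionally requires the other coordinates
to be 0, so that elements of K correspond exactly to vectors in R^(d-k+1)).\<close>

definition chi :: "nat \<Rightarrow> nat \<Rightarrow> nat \<Rightarrow> real" where
  "chi d k i = fact d / (fact (k - i) * fact (d - k - i) * (fact i)^2)"

definition bstar :: "nat \<Rightarrow> nat \<Rightarrow> nat \<Rightarrow> real" where
  "bstar d k i = (if i \<le> d - k then (real d / (2 * real k))^2 / (real (d choose k))^2 * chi d k i else 0)"

definition beta :: "nat \<Rightarrow> nat \<Rightarrow> (nat \<Rightarrow> real) \<Rightarrow> real" where
  "beta d k b = (\<Sum>i=0..d-k. b i)"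

definition gamma :: "nat \<Rightarrow> nat \<Rightarrow> (nat \<Rightarrow> real) \<Rightarrow> real" where
  "gamma d k b = (\<Sum>i=0..d-k. (real k - real i) * b i)"

definition Kset :: "nat \<Rightarrow> nat \<Rightarrow> (nat \<Rightarrow> real) set" where
  "Kset d k = {b. (\<forall>i. d - k < i \<longrightarrow> b i = 0) \<and> (\<forall>i\<le>d-k. 0 \<le> b i) \<and>
      (real d - real k) / real k \<le> beta d k b \<and> beta d k b \<le> real d / (2 * real k)}"

text \<open>g(x) = x log x; note ln 0 = 0 in Isabelle, so g 0 = 0.\<close>
definition g :: "real \<Rightarrow> real" where
  "g x = x * ln x"

definition phi :: "nat \<Rightarrow> nat \<Rightarrow> (nat \<Rightarrow> real) \<Rightarrow> real" where
  "phi d k b = g (gamma d k b) + g (real d / 2 - gamma d k b)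
     - 2 * g (real d / (2 * real k) - beta d k b) - g (1 - real d / real k + beta d k b)
     - 2 * beta d k b * ln (real (d choose k))
     + (\<Sum>i=0..d-k. b i * ln (chi d k i)) - (\<Sum>i=0..d-k. g (b i))"

text \<open>Derivative of a real function (same as HOL-Analysis deriv, which cannot be imported
  alongside Jordan_Normal_Form without name clashes).\<close>
definition rderiv :: "(real \<Rightarrow> real) \<Rightarrow> real \<Rightarrow> real" where
  "rderiv f x = (SOME D. DERIV f x :> D)"

definition partial :: "nat \<Rightarrow> ((nat \<Rightarrow> real) \<Rightarrow> real) \<Rightarrow> (nat \<Rightarrow> real) \<Rightarrow> real" where
  "partial i f b = rderiv (\<lambda>t. f (b(i := t))) (b i)"

definition hessian_entry :: "((nat \<Rightarrow> real) \<Rightarrow> real) \<Rightarrow> (nat \<Rightarrow> real) \<Rightarrow> nat \<Rightarrow> nat \<Rightarrow> real" where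
  "hessian_entry f b i j = partial i (partial j f) b"

definition hessian_mat :: "nat \<Rightarrow> ((nat \<Rightarrow> real) \<Rightarrow> real) \<Rightarrow> (nat \<Rightarrow> real) \<Rightarrow> real mat" where
  "hessian_mat n f b = mat n n (\<lambda>(i, j). hessian_entry f b i j)"

definition negative_definite :: "real mat \<Rightarrow> bool" where
  "negative_definite A \<longleftrightarrow> A \<in> carrier_mat (dim_row A) (dim_row A) \<and>
     (\<forall>x \<in> carrier_vec (dim_row A). x \<noteq> 0\<^sub>v (dim_row A) \<longrightarrow> x \<bullet> (A *\<^sub>v x) < 0)"

end

theory Submission
  imports Defs
begin

text \<open>At \<open>b*\<close> one has \<open>\<beta> = (d/2k)\<^sup>2\<close> and \<open>\<gamma> = d/4\<close> (Vandermonde's identity), so all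
  logarithms in \<open>\<phi>\<close> have positive arguments and the Hessian there is
  \<open>-(diag(1/b*) + c 1 1\<^sup>T - e a a\<^sup>T)\<close> with \<open>a\<^sub>i = k - i\<close>, \<open>e = 8/d\<close> and \<open>c = 4k\<^sup>2(4k-d)/(d(2k-d)\<^sup>2)\<close>.
  Sylvester's identity \<open>det(1 + XY) = det(1 + YX)\<close> reduces the determinant of this diagonal
  plus rank-two matrix to a \<open>2\<times>2\<close> determinant in the moments \<open>\<Sum>b\<^sub>i, \<Sum>a\<^sub>ib\<^sub>i, \<Sum>a\<^sub>i\<^sup>2b\<^sub>i\<close> of \<open>b*\<close>.
  For definiteness, a weighted Cauchy-Schwarz bound on \<open>\<Sum>x\<^sub>i\<^sup>2/b\<^sub>i\<close> in terms of
  \<open>S = \<Sum>x\<^sub>i\<close>, \<open>T = \<Sum>a\<^sub>ix\<^sub>i\<close> turns the quadratic form into a binary form in \<open>(S, T)\<close> whose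
  determinant is a positive multiple of the same \<open>2\<times>2\<close> determinant; so the Hessian is negative
  definite as soon as that determinant is positive, whether or not \<open>b*\<close> is a maximum.\<close>

section \<open>Moments of \<open>\<chi>\<close> and \<open>b*\<close>\<close>

lemma chi_eq_binomials:
  assumes "k \<le> d" and "i \<le> k" and "i \<le> d - k"
  shows "chi d k i = real (d choose k) * real (k choose i) * real ((d - k) choose i)"
proof -
  have "fact d = (d choose k) * (fact k * fact (d - k))"
    using binomial_fact_lemma[of k d] assms by (simp add: algebra_simps)
  also have "fact k = (k choose i) * fact i * fact (k - i)"
    using binomial_fact_lemma[of i k] assms by (simp add: algebra_simps)
  also have "fact (d - k) = ((d - k) choose i) * fact i * fact (d - k - i)"
    using binomial_fact_lemma[of i "d - k"] assms by (simp add: algebra_simps)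
  finally have e: "fact d = (d choose k) * (((k choose i) * fact i * fact (k - i))
      * (((d - k) choose i) * fact i * fact (d - k - i)))" .
  have "(fact d :: real) = real ((d choose k) * (((k choose i) * fact i * fact (k - i))
      * (((d - k) choose i) * fact i * fact (d - k - i))))"
    by (subst e[symmetric]) (simp add: of_nat_fact)
  then show ?thesis
    unfolding chi_def by (simp add: of_nat_fact field_simps power2_eq_square)
qed

lemma sum_choose_mult_choose: "(\<Sum>i=0..n. (m choose i) * (n choose i)) = (m + n) choose n"
proof -
  have "(\<Sum>i=0..n. (m choose i) * (n choose i)) = (\<Sum>i\<le>n. (m choose i) * (n choose (n - i)))"
    by (rule sum.cong) (auto simp: atLeast0AtMost intro: binomial_symmetric)
  also have "\<dots> = (m + n) choose n" by (rule vandermonde)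
  finally show ?thesis .
qed

lemma sum_diff_mult_choose_mult_choose:
  "(\<Sum>i=0..n. (m - i) * (m choose i) * (n choose i)) = m * ((m - 1 + n) choose n)"
proof -
  have "(\<Sum>i=0..n. (m - i) * (m choose i) * (n choose i))
      = (\<Sum>i=0..n. m * (((m - 1) choose i) * (n choose i)))"
    by (rule sum.cong) (auto simp: binomial_absorb_comp)
  then show ?thesis by (simp add: sum_distrib_left[symmetric] sum_choose_mult_choose)
qed

lemma sum_diff2_mult_choose_mult_choose:
  "(\<Sum>i=0..n. (m - i) * (m - 1 - i) * (m choose i) * (n choose i))
     = m * (m - 1) * ((m - 2 + n) choose n)"
proof -
  have "(m - i) * (m - 1 - i) * (m choose i) = m * (m - 1) * ((m - 2) choose i)" for i
  proof -
    have "(m - i) * (m - 1 - i) * (m choose i) = m * ((m - 1 - i) * ((m - 1) choose i))"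
      by (simp add: binomial_absorb_comp)
    also have "(m - 1 - i) * ((m - 1) choose i) = (m - 1) * ((m - 2) choose i)"
      using binomial_absorb_comp[of "m - 1" i] by (simp add: diff_diff_add numeral_2_eq_2)
    finally show ?thesis by simp
  qed
  then have "(\<Sum>i=0..n. (m - i) * (m - 1 - i) * (m choose i) * (n choose i))
      = (\<Sum>i=0..n. m * (m - 1) * (((m - 2) choose i) * (n choose i)))"
    by (simp add: mult.assoc)
  then show ?thesis by (simp add: sum_distrib_left[symmetric] sum_choose_mult_choose)
qed

lemma chi_moments:
  assumes "d - k < k" and "k < d"
  defines "C \<equiv> real (d choose k)"
  shows "(\<Sum>i=0..d-k. chi d k i) = C^2"
    and "(\<Sum>i=0..d-k. (real k - real i) * chi d k i) = C^2 * real k ^ 2 / real d"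
    and "(\<Sum>i=0..d-k. (real k - real i)^2 * chi d k i)
           = C^2 * (real k^2 * (real k - 1)^2 / (real d * (real d - 1)) + real k ^ 2 / real d)"
proof -
  have chi: "chi d k i = C * real (k choose i) * real ((d - k) choose i)" if "i \<le> d - k" for i
    using chi_eq_binomials[of k d i] assms that unfolding C_def by auto
  have d: "real d > 0" "real d - 1 > 0" using assms by auto
  have choose1: "real ((d - 1) choose (d - k)) = real k * C / real d"
  proof -
    have "real k * C = real d * real ((d - 1) choose (k - 1))"
      using times_binomial_minus1_eq[of k d] assms unfolding C_def
      by (metis of_nat_mult gr_zeroI less_nat_zero_code)
    moreover have "(d - 1) choose (d - k) = (d - 1) choose (k - 1)"
      using assms by (subst binomial_symmetric) auto
    ultimately show ?thesis using d by (simp add: field_simps)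
  qed
  have choose2: "real ((d - 2) choose (d - k)) = (real k - 1) * real ((d - 1) choose (d - k)) / (real d - 1)"
  proof -
    have "(k - 1) * ((d - 1) choose (k - 1)) = (d - 1) * ((d - 2) choose (k - 2))"
      using times_binomial_minus1_eq[of "k - 1" "d - 1"] assms by (simp add: diff_diff_add numeral_2_eq_2)
    moreover have "(d - 1) choose (d - k) = (d - 1) choose (k - 1)"
      using assms by (subst binomial_symmetric) auto
    moreover have "(d - 2) choose (d - k) = (d - 2) choose (k - 2)"
    proof -
      have "d - 2 - (d - k) = k - 2" using assms by arith
      then show ?thesis using binomial_symmetric[of "d - k" "d - 2"] assms by simp
    qed
    ultimately have "real (k - 1) * real ((d - 1) choose (d - k)) = real (d - 1) * real ((d - 2) choose (d - k))"
      by (metis of_nat_mult)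
    then show ?thesis using assms d by (simp add: of_nat_diff field_simps)
  qed
  have "(\<Sum>i=0..d-k. chi d k i) = C * real (\<Sum>i=0..d-k. (k choose i) * ((d - k) choose i))"
    by (simp add: chi sum_distrib_left mult.assoc)
  also have "\<dots> = C^2"
    using assms by (simp add: sum_choose_mult_choose binomial_symmetric[symmetric] C_def power2_eq_square)
  finally show "(\<Sum>i=0..d-k. chi d k i) = C^2" .
  have m1: "(\<Sum>i=0..d-k. (real k - real i) * chi d k i) = C * real k * real ((d - 1) choose (d - k))"
  proof -
    have "(\<Sum>i=0..d-k. (real k - real i) * chi d k i)
        = C * real (\<Sum>i=0..d-k. (k - i) * (k choose i) * ((d - k) choose i))"
      unfolding sum_distrib_left of_nat_sum
      by (rule sum.cong) (use assms in \<open>auto simp: chi of_nat_diff\<close>)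
    also have "\<dots> = C * real (k * ((k - 1 + (d - k)) choose (d - k)))"
      by (simp only: sum_diff_mult_choose_mult_choose)
    also have "k - 1 + (d - k) = d - 1" using assms by simp
    finally show ?thesis by simp
  qed
  then show "(\<Sum>i=0..d-k. (real k - real i) * chi d k i) = C^2 * real k ^ 2 / real d"
    unfolding choose1 using d by (simp add: power2_eq_square)
  have m2: "(\<Sum>i=0..d-k. (real k - real i) * (real k - 1 - real i) * chi d k i)
      = C * real k * (real k - 1) * real ((d - 2) choose (d - k))"
  proof -
    have "(\<Sum>i=0..d-k. (real k - real i) * (real k - 1 - real i) * chi d k i)
        = C * real (\<Sum>i=0..d-k. (k - i) * (k - 1 - i) * (k choose i) * ((d - k) choose i))"
      unfolding sum_distrib_left of_nat_sum
      by (rule sum.cong) (use assms in \<open>auto simp: chi of_nat_diff\<close>)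
    also have "\<dots> = C * real (k * (k - 1) * ((k - 2 + (d - k)) choose (d - k)))"
      by (simp only: sum_diff2_mult_choose_mult_choose)
    also have "k - 2 + (d - k) = d - 2" using assms by simp
    finally show ?thesis using assms by (simp add: of_nat_diff)
  qed
  have "(\<Sum>i=0..d-k. (real k - real i)^2 * chi d k i)
      = (\<Sum>i=0..d-k. (real k - real i) * (real k - 1 - real i) * chi d k i)
        + (\<Sum>i=0..d-k. (real k - real i) * chi d k i)"
    by (simp add: sum.distrib[symmetric] power2_eq_square algebra_simps)
  then show "(\<Sum>i=0..d-k. (real k - real i)^2 * chi d k i)
      = C^2 * (real k^2 * (real k - 1)^2 / (real d * (real d - 1)) + real k ^ 2 / real d)"
    unfolding m1 m2 choose2 choose1 using d by (simp add: field_simps power2_eq_square)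
qed

lemma bstar_pos:
  assumes "0 < k" and "k \<le> d" and "i \<le> d - k"
  shows "0 < bstar d k i"
  using assms unfolding bstar_def chi_def by simp

lemma bstar_moments:
  assumes "d - k < k" and "k < d"
  shows "beta d k (bstar d k) = (real d / (2 * real k))^2"
    and "gamma d k (bstar d k) = real d / 4"
    and "(\<Sum>i=0..d-k. (real k - real i)^2 * bstar d k i)
           = real d * ((real k - 1)^2 + (real d - 1)) / (4 * (real d - 1))"
proof -
  define C where "C = real (d choose k)"
  have C: "C > 0" and d: "real d > 1" and k: "real k > 0"
    using assms unfolding C_def by auto
  define \<kappa> where "\<kappa> = (real d / (2 * real k))^2 / C^2"
  have bstar: "bstar d k i = \<kappa> * chi d k i" if "i \<in> {0..d-k}" for i
    using that unfolding bstar_def \<kappa>_def C_def by simp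
  note M = chi_moments[OF assms, folded C_def]
  have "beta d k (bstar d k) = \<kappa> * (\<Sum>i=0..d-k. chi d k i)"
    unfolding beta_def by (simp add: bstar sum_distrib_left)
  then show "beta d k (bstar d k) = (real d / (2 * real k))^2"
    unfolding M \<kappa>_def using C by simp
  have "gamma d k (bstar d k) = \<kappa> * (\<Sum>i=0..d-k. (real k - real i) * chi d k i)"
    unfolding gamma_def by (simp add: bstar sum_distrib_left algebra_simps)
  then show "gamma d k (bstar d k) = real d / 4"
    unfolding M \<kappa>_def using C d k by (simp add: field_simps power2_eq_square)
  have "(\<Sum>i=0..d-k. (real k - real i)^2 * bstar d k i) = \<kappa> * (\<Sum>i=0..d-k. (real k - real i)^2 * chi d k i)"
    by (simp add: bstar sum_distrib_left mult_ac)
  also have "\<dots> = real d * ((real k - 1)^2 + (real d - 1)) / (4 * (real d - 1))"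
    unfolding M \<kappa>_def using C d k by (simp add: field_simps power2_eq_square)
  finally show "(\<Sum>i=0..d-k. (real k - real i)^2 * bstar d k i)
      = real d * ((real k - 1)^2 + (real d - 1)) / (4 * (real d - 1))" .
qed

section \<open>Second partial derivatives of \<open>\<phi>\<close>\<close>

lemma sum_fun_upd:
  fixes h :: "'a \<Rightarrow> 'b \<Rightarrow> 'c :: ab_group_add"
  assumes "finite A" and "j \<in> A"
  shows "(\<Sum>i\<in>A. h i ((b(j := s)) i)) = (\<Sum>i\<in>A. h i (b i)) - h j (b j) + h j s"
proof -
  have "(\<Sum>i\<in>A. h i ((b(j := s)) i)) = h j s + (\<Sum>i\<in>A - {j}. h i ((b(j := s)) i))"
    using assms by (simp add: sum.remove)
  also have "(\<Sum>i\<in>A - {j}. h i ((b(j := s)) i)) = (\<Sum>i\<in>A - {j}. h i (b i))"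
    by (rule sum.cong) auto
  also have "(\<Sum>i\<in>A - {j}. h i (b i)) = (\<Sum>i\<in>A. h i (b i)) - h j (b j)"
    using assms by (simp add: sum.remove[of A j])
  finally show ?thesis by (simp add: algebra_simps)
qed

lemma rderiv_eqI: "DERIV f x :> D \<Longrightarrow> rderiv f x = D"
  unfolding rderiv_def by (rule some_equality) (auto intro: DERIV_unique)

lemma DERIV_g_comp [derivative_intros]:
  assumes "(f has_real_derivative f') (at x within S)" and "0 < f x"
  shows "((\<lambda>x. g (f x)) has_real_derivative (ln (f x) + 1) * f') (at x within S)"
proof -
  have "(g has_real_derivative ln (f x) + 1) (at (f x))"
    unfolding g_def using assms(2) by (auto intro!: derivative_eq_intros)
  then show ?thesis using DERIV_chain2[OF _ assms(1)] by blast
qed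

definition phi_interior :: "nat \<Rightarrow> nat \<Rightarrow> (nat \<Rightarrow> real) \<Rightarrow> bool" where
  "phi_interior d k b \<longleftrightarrow> 0 < gamma d k b \<and> 0 < real d / 2 - gamma d k b
     \<and> 0 < real d / (2 * real k) - beta d k b \<and> 0 < 1 - real d / real k + beta d k b
     \<and> (\<forall>i\<le>d-k. 0 < b i)"

definition grad_phi :: "nat \<Rightarrow> nat \<Rightarrow> nat \<Rightarrow> (nat \<Rightarrow> real) \<Rightarrow> real" where
  "grad_phi d k j b = (real k - real j) * ln (gamma d k b) - (real k - real j) * ln (real d / 2 - gamma d k b)
     + 2 * ln (real d / (2 * real k) - beta d k b) - ln (1 - real d / real k + beta d k b)
     - 2 * ln (real (d choose k)) + ln (chi d k j) - ln (b j)"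

lemma gamma_fun_upd:
  "j \<le> d - k \<Longrightarrow> gamma d k (b(j := t)) = gamma d k b - (real k - real j) * b j + (real k - real j) * t"
  unfolding gamma_def by (subst sum_fun_upd) auto

lemma beta_fun_upd: "j \<le> d - k \<Longrightarrow> beta d k (b(j := t)) = beta d k b - b j + t"
  unfolding beta_def by (subst sum_fun_upd[where h = "\<lambda>i x. x"]) auto

lemma phi_fun_upd:
  assumes "j \<le> d - k"
  shows "phi d k (b(j := t)) =
     g (gamma d k b - (real k - real j) * b j + (real k - real j) * t)
   + g (real d / 2 - (gamma d k b - (real k - real j) * b j + (real k - real j) * t))
   - 2 * g (real d / (2 * real k) - (beta d k b - b j + t)) - g (1 - real d / real k + (beta d k b - b j + t))
   - 2 * (beta d k b - b j + t) * ln (real (d choose k))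
   + ((\<Sum>i=0..d-k. b i * ln (chi d k i)) - b j * ln (chi d k j) + t * ln (chi d k j))
   - ((\<Sum>i=0..d-k. g (b i)) - g (b j) + g t)"
  unfolding phi_def gamma_fun_upd[OF assms] beta_fun_upd[OF assms]
  by (subst sum_fun_upd[where h = "\<lambda>i x. x * ln (chi d k i)"], simp, simp add: assms)
     (subst sum_fun_upd[where h = "\<lambda>i. g"], simp, simp add: assms, simp)

lemma partial_phi:
  assumes "j \<le> d - k" and "phi_interior d k b"
  shows "partial j (phi d k) b = grad_phi d k j b"
  unfolding partial_def
proof (rule rderiv_eqI)
  show "DERIV (\<lambda>t. phi d k (b(j := t))) (b j) :> grad_phi d k j b"
    unfolding phi_fun_upd[OF assms(1)] using assms
    by (auto intro!: derivative_eq_intros simp: phi_interior_def grad_phi_def algebra_simps)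
qed

lemma eventually_pos_affine:
  fixes p q x :: real
  assumes "0 < p + q * x"
  shows "eventually (\<lambda>t. 0 < p + q * t) (nhds x)"
proof -
  have "((\<lambda>t. p + q * t) \<longlongrightarrow> p + q * x) (at x)" by (intro tendsto_intros)
  then have "((\<lambda>t. p + q * t) \<longlongrightarrow> p + q * x) (nhds x)"
    using tendsto_at_iff_tendsto_nhds[of "\<lambda>t. p + q * t" x] by simp
  from order_tendstoD(1)[OF this assms] show ?thesis .
qed

lemma eventually_phi_interior_fun_upd:
  assumes i: "i \<le> d - k" and "phi_interior d k b"
  shows "eventually (\<lambda>t. phi_interior d k (b(i := t))) (nhds (b i))"
proof -
  define a where "a = real k - real i"
  have p: "0 < gamma d k b" "0 < real d / 2 - gamma d k b" "0 < real d / (2 * real k) - beta d k b"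
     "0 < 1 - real d / real k + beta d k b" "\<forall>l\<le>d-k. 0 < b l"
    using assms(2) unfolding phi_interior_def by auto
  have "eventually (\<lambda>t. 0 < (gamma d k b - a * b i) + a * t) (nhds (b i))"
    and "eventually (\<lambda>t. 0 < (real d / 2 - gamma d k b + a * b i) + (- a) * t) (nhds (b i))"
    and "eventually (\<lambda>t. 0 < (real d / (2 * real k) - beta d k b + b i) + (-1) * t) (nhds (b i))"
    and "eventually (\<lambda>t. 0 < (1 - real d / real k + beta d k b - b i) + 1 * t) (nhds (b i))"
    and "eventually (\<lambda>t. 0 < 0 + 1 * t) (nhds (b i))"
    using p i by (intro eventually_pos_affine; simp)+
  then show ?thesis
    by eventually_elim (use p i in \<open>auto simp: phi_interior_def gamma_fun_upd beta_fun_upd a_def algebra_simps\<close>)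
qed

lemma hessian_entry_phi:
  assumes i: "i \<le> d - k" and j: "j \<le> d - k" and b: "phi_interior d k b"
  shows "hessian_entry (phi d k) b i j =
     (real k - real i) * (real k - real j) * (1 / gamma d k b + 1 / (real d / 2 - gamma d k b))
     - 2 / (real d / (2 * real k) - beta d k b) - 1 / (1 - real d / real k + beta d k b)
     - (if i = j then 1 / b i else 0)"
proof -
  have ev: "eventually (\<lambda>t. partial j (phi d k) (b(i := t)) = grad_phi d k j (b(i := t))) (nhds (b i))"
    using eventually_phi_interior_fun_upd[OF i b] by eventually_elim (rule partial_phi[OF j])
  have D: "((\<lambda>t. grad_phi d k j (b(i := t))) has_real_derivative
     (real k - real i) * (real k - real j) * (1 / gamma d k b + 1 / (real d / 2 - gamma d k b))
     - 2 / (real d / (2 * real k) - beta d k b) - 1 / (1 - real d / real k + beta d k b)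
     - (if i = j then 1 / b i else 0)) (at (b i))"
    unfolding grad_phi_def gamma_fun_upd[OF i] beta_fun_upd[OF i] using b i
    by (cases "i = j"; auto intro!: derivative_eq_intros simp: phi_interior_def;
        simp add: algebra_simps add_divide_distrib diff_divide_distrib)
  show ?thesis
    unfolding hessian_entry_def partial_def[of i]
    by (rule rderiv_eqI) (use DERIV_cong_ev[OF refl ev refl] D in blast)
qed

section \<open>Diagonal plus rank-two matrices\<close>

lemma det_one_plus_mult_commute:
  fixes X :: "'a :: idom mat"
  assumes X: "X \<in> carrier_mat n m" and Y: "Y \<in> carrier_mat m n"
  shows "det (1\<^sub>m n + X * Y) = det (1\<^sub>m m + Y * X)"
proof -
  define M where "M = four_block_mat (1\<^sub>m n) (-X) Y (1\<^sub>m m)"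
  define L where "L = four_block_mat (1\<^sub>m n) (0\<^sub>m n m) (-Y) (1\<^sub>m m)"
  define R where "R = four_block_mat (1\<^sub>m n) X (0\<^sub>m m n) (1\<^sub>m m)"
  have mX: "-X \<in> carrier_mat n m" and mY: "-Y \<in> carrier_mat m n" using X Y by auto
  have M: "M \<in> carrier_mat (n + m) (n + m)" unfolding M_def using X Y by auto
  have M_times_L: "M * L = four_block_mat (1\<^sub>m n + X * Y) (-X) (0\<^sub>m m n) (1\<^sub>m m)"
    unfolding M_def L_def
    by (subst mult_four_block_mat[OF one_carrier_mat mX Y one_carrier_mat one_carrier_mat
          zero_carrier_mat mY one_carrier_mat]) (use X Y in auto)
  have det_M_times_L: "det (M * L) = det (1\<^sub>m n + X * Y)"
    unfolding M_times_L by (subst det_four_block_mat_lower_left_zero[of _ n _ m]) (use X Y in auto)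
  have M_times_R: "M * R = four_block_mat (1\<^sub>m n) (0\<^sub>m n m) Y (1\<^sub>m m + Y * X)"
    unfolding M_def R_def
    by (subst mult_four_block_mat[OF one_carrier_mat mX Y one_carrier_mat one_carrier_mat
          X zero_carrier_mat one_carrier_mat]) (use X Y in auto)
  have det_M_times_R: "det (M * R) = det (1\<^sub>m m + Y * X)"
    unfolding M_times_R by (subst det_four_block_mat_upper_right_zero[of _ n _ m]) (use X Y in auto)
  have "det L = 1" unfolding L_def
    by (subst det_four_block_mat_upper_right_zero[of _ n _ m]) (use Y in auto)
  moreover have "det R = 1" unfolding R_def
    by (subst det_four_block_mat_lower_left_zero[of _ n _ m]) (use X in auto)
  moreover have "L \<in> carrier_mat (n + m) (n + m)" "R \<in> carrier_mat (n + m) (n + m)"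
    unfolding L_def R_def using X Y by auto
  ultimately show ?thesis
    using det_M_times_L det_M_times_R det_mult[OF M] by metis
qed

lemma det_dim_two:
  fixes A :: "'a :: comm_ring_1 mat"
  assumes "A \<in> carrier_mat 2 2"
  shows "det A = A $$ (0,0) * A $$ (1,1) - A $$ (0,1) * A $$ (1,0)"
proof -
  have "det A = (\<Sum>j<2. A $$ (0,j) * cofactor A 0 j)"
    by (rule laplace_expansion_row[OF assms]) simp
  also have "\<dots> = A $$ (0,0) * cofactor A 0 0 + A $$ (0,1) * cofactor A 0 1"
    by (simp add: numeral_2_eq_2)
  also have "cofactor A 0 0 = A $$ (1,1)"
    unfolding cofactor_def using assms by (subst det_single) (auto simp: mat_delete_def)
  also have "cofactor A 0 1 = - A $$ (1,0)"
    unfolding cofactor_def using assms by (subst det_single) (auto simp: mat_delete_def)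
  finally show ?thesis by simp
qed

definition diag_rank_two_mat :: "nat \<Rightarrow> (nat \<Rightarrow> real) \<Rightarrow> (nat \<Rightarrow> real) \<Rightarrow> real \<Rightarrow> real \<Rightarrow> real mat" where
  "diag_rank_two_mat N b a c e = mat N N (\<lambda>(i, j). (if i = j then 1 / b i else 0) + c - e * a i * a j)"

lemma det_diag_rank_two_mat:
  assumes bpos: "\<And>i. i < N \<Longrightarrow> 0 < b i"
  shows "det (diag_rank_two_mat N b a c e)
    = (\<Prod>i<N. 1 / b i) * ((1 + c * (\<Sum>i<N. b i)) * (1 - e * (\<Sum>i<N. a i ^ 2 * b i))
         + c * e * (\<Sum>i<N. a i * b i)^2)"
proof -
  define D where "D = mat N N (\<lambda>(i, j). if i = j then 1 / b i else (0::real))"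
  define X where "X = mat N 2 (\<lambda>(i, l). if l = 0 then b i else b i * a i)"
  define V where "V = mat 2 N (\<lambda>(l, j). if l = 0 then c else - e * a j)"
  have D: "D \<in> carrier_mat N N" and X: "X \<in> carrier_mat N 2" and V: "V \<in> carrier_mat 2 N"
    unfolding D_def X_def V_def by auto
  have factor: "diag_rank_two_mat N b a c e = D * (1\<^sub>m N + X * V)"
  proof (rule eq_matI)
    fix i j assume "i < dim_row (D * (1\<^sub>m N + X * V))" "j < dim_col (D * (1\<^sub>m N + X * V))"
    then have i: "i < N" and j: "j < N" using D X V by auto
    have "(D * (1\<^sub>m N + X * V)) $$ (i, j) = (\<Sum>l<N. (if i = l then 1 / b i else 0) * (1\<^sub>m N + X * V) $$ (l, j))"
      using i j D X V unfolding D_def by (simp add: scalar_prod_def lessThan_atLeast0)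
    also have "\<dots> = (1 / b i) * (1\<^sub>m N + X * V) $$ (i, j)"
      using i by (simp add: if_distrib[of "\<lambda>x. x * _"] sum.delta cong: if_cong)
    also have "\<dots> = (if i = j then 1 / b i else 0) + c - e * a i * a j"
      using i j bpos[OF i] bpos[OF j] unfolding X_def V_def
      by (simp add: scalar_prod_def numeral_2_eq_2 field_simps)
    finally show "diag_rank_two_mat N b a c e $$ (i, j) = (D * (1\<^sub>m N + X * V)) $$ (i, j)"
      using i j by (simp add: diag_rank_two_mat_def)
  qed (use D X V in \<open>auto simp: diag_rank_two_mat_def\<close>)
  have "det D = prod_list (diag_mat D)"
    by (rule det_upper_triangular[OF _ D]) (auto simp: D_def upper_triangular_def)
  also have "\<dots> = (\<Prod>i<N. 1 / b i)"
    unfolding diag_mat_def D_def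
    by (simp add: prod.distinct_set_conv_list[symmetric] lessThan_atLeast0 cong: map_cong)
  finally have detD: "det D = (\<Prod>i<N. 1 / b i)" .
  have VX: "1\<^sub>m 2 + V * X = mat 2 2 (\<lambda>(l, m).
      if l = 0 then (if m = 0 then 1 + c * (\<Sum>i<N. b i) else c * (\<Sum>i<N. a i * b i))
      else (if m = 0 then - e * (\<Sum>i<N. a i * b i) else 1 - e * (\<Sum>i<N. a i ^ 2 * b i)))"
    by (rule eq_matI) (use V X in \<open>auto simp: V_def X_def scalar_prod_def lessThan_atLeast0
        sum_distrib_left power2_eq_square algebra_simps less_2_cases_iff sum_negf\<close>)
  have "det (diag_rank_two_mat N b a c e) = det D * det (1\<^sub>m 2 + V * X)"
    unfolding factor det_one_plus_mult_commute[OF X V, symmetric]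
    by (rule det_mult[OF D]) (use X V in auto)
  also have "det (1\<^sub>m 2 + V * X) = (1 + c * (\<Sum>i<N. b i)) * (1 - e * (\<Sum>i<N. a i ^ 2 * b i))
      + c * e * (\<Sum>i<N. a i * b i)^2"
    unfolding VX by (subst det_dim_two) (auto simp: power2_eq_square algebra_simps)
  finally show ?thesis unfolding detD .
qed

lemma binary_quadratic_form_pos:
  fixes A B C S T :: real
  assumes "0 < A" and "B^2 < A * C" and "S \<noteq> 0 \<or> T \<noteq> 0"
  shows "0 < A * S^2 + 2 * B * S * T + C * T^2"
proof -
  have "A * (A * S^2 + 2 * B * S * T + C * T^2) = (A * S + B * T)^2 + (A * C - B^2) * T^2"
    by (simp add: power2_eq_square algebra_simps)
  moreover have "0 < (A * S + B * T)^2 + (A * C - B^2) * T^2"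
  proof (cases "T = 0")
    case True
    then show ?thesis using assms by simp
  next
    case False
    then show ?thesis using assms(2) by (simp add: add_nonneg_pos)
  qed
  ultimately show ?thesis using assms(1) by (metis zero_less_mult_pos)
qed

lemma sum_sq_div_ge_moment_form:
  fixes a b x :: "nat \<Rightarrow> real"
  assumes bpos: "\<And>i. i < N \<Longrightarrow> 0 < b i"
  defines "\<beta> \<equiv> \<Sum>i<N. b i" and "\<gamma> \<equiv> \<Sum>i<N. a i * b i" and "s \<equiv> \<Sum>i<N. a i ^ 2 * b i"
  defines "S \<equiv> \<Sum>i<N. x i" and "T \<equiv> \<Sum>i<N. a i * x i"
  assumes moment_det_pos: "0 < \<beta> * s - \<gamma>^2"
  shows "(s * S^2 - 2 * \<gamma> * S * T + \<beta> * T^2) / (\<beta> * s - \<gamma>^2) \<le> (\<Sum>i<N. x i ^ 2 / b i)"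
proof -
  define Q where "Q = (\<Sum>i<N. x i ^ 2 / b i)"
  define \<Delta> where "\<Delta> = \<beta> * s - \<gamma>^2"
  have bound: "2 * (p * S + q * T) - (p^2 * \<beta> + 2 * p * q * \<gamma> + q^2 * s) \<le> Q" for p q
  proof -
    have "0 \<le> (\<Sum>i<N. (x i - b i * (p + q * a i))^2 / b i)"
      by (rule sum_nonneg) (use bpos in \<open>auto intro!: divide_nonneg_pos\<close>)
    also have "\<dots> = (\<Sum>i<N. x i ^ 2 / b i + (-2 * p) * x i + (- 2 * q) * (a i * x i)
        + p^2 * b i + (2 * p * q) * (a i * b i) + q^2 * (a i ^ 2 * b i))"
    proof (rule sum.cong)
      fix i assume "i \<in> {..<N}"
      then have "b i \<noteq> 0" using bpos by force
      then show "(x i - b i * (p + q * a i))^2 / b i = x i ^ 2 / b i + (-2 * p) * x i + (- 2 * q) * (a i * x i)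
          + p^2 * b i + (2 * p * q) * (a i * b i) + q^2 * (a i ^ 2 * b i)"
        by (simp add: field_simps power2_eq_square)
    qed simp
    also have "\<dots> = Q + (-2 * p) * S + (-2 * q) * T + p^2 * \<beta> + (2 * p * q) * \<gamma> + q^2 * s"
      unfolding Q_def S_def T_def \<beta>_def \<gamma>_def s_def
      by (simp add: sum.distrib sum_distrib_left sum_subtractf sum_negf)
    finally show ?thesis by simp
  qed
  have \<Delta>: "0 < \<Delta>" using moment_det_pos unfolding \<Delta>_def .
  \<comment> \<open>the bound is sharpest for \<open>(p, q) = (p', q') / \<Delta>\<close>, the solution of its normal equations\<close>
  define p' where "p' = s * S - \<gamma> * T"
  define q' where "q' = \<beta> * T - \<gamma> * S"
  have num: "2 * \<Delta> * (p' * S + q' * T) - (p'^2 * \<beta> + 2 * p' * q' * \<gamma> + q'^2 * s)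
      = \<Delta> * (s * S^2 - 2 * \<gamma> * S * T + \<beta> * T^2)"
    unfolding \<Delta>_def p'_def q'_def by (simp add: power2_eq_square algebra_simps)
  have "2 * (p' / \<Delta> * S + q' / \<Delta> * T) - ((p' / \<Delta>)^2 * \<beta> + 2 * (p' / \<Delta>) * (q' / \<Delta>) * \<gamma> + (q' / \<Delta>)^2 * s)
      = (2 * \<Delta> * (p' * S + q' * T) - (p'^2 * \<beta> + 2 * p' * q' * \<gamma> + q'^2 * s)) / \<Delta>^2"
    using \<Delta> by (simp add: field_simps power2_eq_square)
  also have "\<dots> = (s * S^2 - 2 * \<gamma> * S * T + \<beta> * T^2) / \<Delta>"
    unfolding num using \<Delta> by (simp add: power2_eq_square)
  finally show ?thesis using bound[of "p' / \<Delta>" "q' / \<Delta>"] unfolding Q_def \<Delta>_def by simp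
qed

lemma diag_rank_two_form_pos:
  fixes a b x :: "nat \<Rightarrow> real"
  assumes bpos: "\<And>i. i < N \<Longrightarrow> 0 < b i" and x: "\<exists>i<N. x i \<noteq> 0"
  defines "\<beta> \<equiv> \<Sum>i<N. b i" and "\<gamma> \<equiv> \<Sum>i<N. a i * b i" and "s \<equiv> \<Sum>i<N. a i ^ 2 * b i"
  assumes moment_det_pos: "0 < \<beta> * s - \<gamma>^2" and "0 \<le> c"
    and det_pos: "0 < (1 + c * \<beta>) * (1 - e * s) + c * e * \<gamma>^2"
  shows "0 < (\<Sum>i<N. x i ^ 2 / b i) + c * (\<Sum>i<N. x i)^2 - e * (\<Sum>i<N. a i * x i)^2"
proof -
  define \<Delta> where "\<Delta> = \<beta> * s - \<gamma>^2"
  define S where "S = (\<Sum>i<N. x i)"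
  define T where "T = (\<Sum>i<N. a i * x i)"
  define Q where "Q = (\<Sum>i<N. x i ^ 2 / b i)"
  have \<Delta>: "0 < \<Delta>" using moment_det_pos unfolding \<Delta>_def .
  show ?thesis
  proof (cases "S = 0 \<and> T = 0")
    case True
    obtain i where "i < N" "x i \<noteq> 0" using x by auto
    then have "0 < Q"
      unfolding Q_def by (intro sum_pos2[of _ i]) (use bpos in \<open>auto intro!: divide_nonneg_pos\<close>)
    then show ?thesis using True unfolding Q_def S_def T_def by simp
  next
    case False
    have "0 \<le> \<beta>" unfolding \<beta>_def by (rule sum_nonneg) (simp add: bpos less_imp_le)
    then have "0 < s" using \<Delta> unfolding \<Delta>_def
      by (smt (verit) mult_nonneg_nonpos zero_le_power2)
    then have A: "0 < s + \<Delta> * c" using \<Delta> \<open>0 \<le> c\<close> by (simp add: add_pos_nonneg)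
    \<comment> \<open>after the bound on \<open>Q\<close>, a binary form in \<open>(S, T)\<close> remains; its determinant is \<open>\<Delta>\<close> times \<open>det_pos\<close>\<close>
    have "(s + \<Delta> * c) * (\<beta> - e * \<Delta>) - \<gamma>^2 = \<Delta> * ((1 + c * \<beta>) * (1 - e * s) + c * e * \<gamma>^2)"
      unfolding \<Delta>_def by (simp add: power2_eq_square algebra_simps)
    moreover have "0 < \<Delta> * ((1 + c * \<beta>) * (1 - e * s) + c * e * \<gamma>^2)"
      using \<Delta> det_pos by simp
    ultimately have "(- \<gamma>)^2 < (s + \<Delta> * c) * (\<beta> - e * \<Delta>)" by simp
    from binary_quadratic_form_pos[OF A this] False
    have "0 < (s + \<Delta> * c) * S^2 + 2 * (- \<gamma>) * S * T + (\<beta> - e * \<Delta>) * T^2" by simp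
    then have "0 < (s * S^2 - 2 * \<gamma> * S * T + \<beta> * T^2) / \<Delta> + c * S^2 - e * T^2"
      using \<Delta> by (simp add: field_simps)
    moreover have "(s * S^2 - 2 * \<gamma> * S * T + \<beta> * T^2) / \<Delta> \<le> Q"
      using sum_sq_div_ge_moment_form[OF bpos moment_det_pos[unfolded \<beta>_def \<gamma>_def s_def]]
      unfolding Q_def S_def T_def \<Delta>_def \<beta>_def \<gamma>_def s_def .
    ultimately show ?thesis unfolding Q_def S_def T_def by simp
  qed
qed

lemma negative_definite_uminus_diag_rank_two_mat:
  fixes a b :: "nat \<Rightarrow> real"
  assumes bpos: "\<And>i. i < N \<Longrightarrow> 0 < b i"
    and "0 < (\<Sum>i<N. b i) * (\<Sum>i<N. a i ^ 2 * b i) - (\<Sum>i<N. a i * b i)^2" and "0 \<le> c"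
    and "0 < (1 + c * (\<Sum>i<N. b i)) * (1 - e * (\<Sum>i<N. a i ^ 2 * b i)) + c * e * (\<Sum>i<N. a i * b i)^2"
  shows "negative_definite (- diag_rank_two_mat N b a c e)"
  unfolding negative_definite_def
proof (intro conjI ballI impI)
  define M where "M = diag_rank_two_mat N b a c e"
  have dim: "dim_row (- M) = N" unfolding M_def diag_rank_two_mat_def by simp
  then show "- M \<in> carrier_mat (dim_row (- M)) (dim_row (- M))"
    unfolding M_def diag_rank_two_mat_def by auto
  fix x :: "real vec" assume x: "x \<in> carrier_vec (dim_row (- M))" "x \<noteq> 0\<^sub>v (dim_row (- M))"
  have x_nz: "\<exists>i<N. x $ i \<noteq> 0"
  proof (rule ccontr)
    assume "\<not> (\<exists>i<N. x $ i \<noteq> 0)"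
    then have "x = 0\<^sub>v N" using x dim by (intro eq_vecI) auto
    then show False using x dim by simp
  qed
  define S where "S = (\<Sum>j<N. x $ j)"
  define T where "T = (\<Sum>j<N. a j * x $ j)"
  have Mx: "(M *\<^sub>v x) $ i = x $ i / b i + c * S - e * a i * T" if "i < N" for i
  proof -
    have "(M *\<^sub>v x) $ i = (\<Sum>j<N. ((if i = j then 1 / b i else 0) + c - e * a i * a j) * x $ j)"
      using that x dim unfolding M_def diag_rank_two_mat_def by (simp add: scalar_prod_def lessThan_atLeast0)
    also have "\<dots> = (\<Sum>j<N. (if i = j then x $ i / b i else 0) + c * x $ j - (e * a i) * (a j * x $ j))"
      by (rule sum.cong) (auto simp: algebra_simps)
    finally show ?thesis
      using that unfolding S_def T_def by (simp add: sum.distrib sum_subtractf sum_distrib_left)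
  qed
  have "x \<bullet> (M *\<^sub>v x) = (\<Sum>i<N. x $ i * (M *\<^sub>v x) $ i)"
    using dim by (simp add: M_def diag_rank_two_mat_def scalar_prod_def lessThan_atLeast0)
  also have "\<dots> = (\<Sum>i<N. x $ i ^ 2 / b i + c * S * x $ i - e * T * (a i * x $ i))"
    by (rule sum.cong) (auto simp: Mx algebra_simps power2_eq_square)
  also have "\<dots> = (\<Sum>i<N. x $ i ^ 2 / b i) + c * S^2 - e * T^2"
    by (simp add: sum.distrib sum_subtractf sum_distrib_left[symmetric] S_def[symmetric] T_def[symmetric]
        power2_eq_square)
  finally have "x \<bullet> (M *\<^sub>v x) = (\<Sum>i<N. x $ i ^ 2 / b i) + c * S^2 - e * T^2" .
  moreover have "0 < (\<Sum>i<N. x $ i ^ 2 / b i) + c * S^2 - e * T^2"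
    unfolding S_def T_def by (rule diag_rank_two_form_pos[OF bpos x_nz assms(2-4)])
  moreover have "x \<bullet> (- M *\<^sub>v x) = - (x \<bullet> (M *\<^sub>v x))"
    using x dim by (simp add: M_def diag_rank_two_mat_def)
  ultimately show "x \<bullet> (- M *\<^sub>v x) < 0" by simp
qed

section \<open>The Hessian of \<open>\<phi>\<close> at \<open>b*\<close>\<close>

lemma hessian_mat_phi_bstar:
  assumes "d - k < k" and "k < d"
  shows "hessian_mat (d - k + 1) (phi d k) (bstar d k)
    = - diag_rank_two_mat (d - k + 1) (bstar d k) (\<lambda>i. real k - real i)
          (4 * real k^2 * (4 * real k - real d) / (real d * (2 * real k - real d)^2)) (8 / real d)"
    (is "?H = - ?M")
proof -
  define t where "t = real d / (2 * real k)"
  have k: "0 < real k" and d: "0 < real d" and t: "0 < t" "t < 1"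
    using assms unfolding t_def by auto
  note moments = bstar_moments[OF assms]
  have gap1: "real d / (2 * real k) - beta d k (bstar d k) = t * (1 - t)"
    unfolding moments t_def by (simp add: power2_eq_square algebra_simps)
  have gap2: "1 - real d / real k + beta d k (bstar d k) = (1 - t)^2"
    unfolding moments t_def using k by (simp add: power2_eq_square field_simps)
  have interior: "phi_interior d k (bstar d k)"
    unfolding phi_interior_def gap1 gap2 using moments t d assms bstar_pos[of k d] by auto
  have e: "1 / gamma d k (bstar d k) + 1 / (real d / 2 - gamma d k (bstar d k)) = 8 / real d"
    unfolding moments using d by (simp add: field_simps)
  have c: "2 / (t * (1 - t)) + 1 / (1 - t)^2
      = 4 * real k^2 * (4 * real k - real d) / (real d * (2 * real k - real d)^2)"
  proof -
    define X where "X = 2 * real k - real d"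
    have X: "0 < X" using assms unfolding X_def by simp
    have t1: "t * (1 - t) = real d * X / (4 * real k^2)" and t2: "(1 - t)^2 = X^2 / (4 * real k^2)"
      unfolding t_def X_def using k by (simp_all add: field_simps power2_eq_square)
    have "4 * real k - real d = 2 * X + real d" unfolding X_def by simp
    then show ?thesis
      unfolding X_def[symmetric] t1 t2 using X k d by (simp add: field_simps power2_eq_square)
  qed
  show ?thesis
  proof (rule eq_matI)
    fix i j assume "i < dim_row (- ?M)" and "j < dim_col (- ?M)"
    then have i: "i \<le> d - k" and j: "j \<le> d - k" by (auto simp: diag_rank_two_mat_def)
    define E where "E = 8 / real d"
    define C where "C = 2 / (t * (1 - t)) + 1 / (1 - t)^2"
    have "?H $$ (i, j) = (real k - real i) * (real k - real j) * E - C - (if i = j then 1 / bstar d k i else 0)"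
      using i j unfolding hessian_mat_def E_def C_def
      by (simp add: hessian_entry_phi[OF i j interior] gap1 gap2 e)
    moreover have "(- ?M) $$ (i, j) = - ((if i = j then 1 / bstar d k i else 0) + C - E * (real k - real i) * (real k - real j))"
      using i j unfolding E_def C_def c by (simp add: diag_rank_two_mat_def)
    ultimately show "?H $$ (i, j) = (- ?M) $$ (i, j)" by (simp add: algebra_simps)
  qed (auto simp: hessian_mat_def diag_rank_two_mat_def)
qed

lemma bstar_det_factor:
  fixes D K :: real
  assumes K: "0 < K" and D: "1 < D" and DK: "D < 2 * K"
  shows "(1 + 4 * K^2 * (4 * K - D) / (D * (2 * K - D)^2) * (D / (2 * K))^2)
         * (1 - 8 / D * (D * ((K - 1)^2 + (D - 1)) / (4 * (D - 1))))
       + 4 * K^2 * (4 * K - D) / (D * (2 * K - D)^2) * (8 / D) * (D / 4)^2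
     = 2 * K^2 / ((D - 1) * (2 * K - D)^2) * (4 * K - D - 2 - (2 * K - D)^2)"
    (is "?lhs = ?rhs")
proof -
  \<comment> \<open>with the denominators' factors as atoms, \<open>field_simps\<close> can clear them\<close>
  define X Y where "X = 2 * K - D" and "Y = D - 1"
  have X: "0 < X" and Y: "0 < Y" using D DK unfolding X_def Y_def by auto
  have "?lhs - ?rhs = ((X^2 + D * (4 * K - D)) * (Y - 2 * ((K - 1)^2 + Y))
      + 2 * K^2 * (4 * K - D) * Y - 2 * K^2 * (4 * K - D - 2 - X^2)) / (X^2 * Y)"
    unfolding X_def[symmetric] Y_def[symmetric] using X Y K D by (simp add: field_simps power2_eq_square)
  also have "(X^2 + D * (4 * K - D)) * (Y - 2 * ((K - 1)^2 + Y))
      + 2 * K^2 * (4 * K - D) * Y - 2 * K^2 * (4 * K - D - 2 - X^2) = 0"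
    unfolding X_def Y_def by (simp add: power2_eq_square algebra_simps)
  finally show ?thesis by simp
qed

lemma bstar_moment_det:
  fixes D K :: real
  assumes K: "0 < K" and D: "1 < D"
  shows "(D / (2 * K))^2 * (D * ((K - 1)^2 + (D - 1)) / (4 * (D - 1))) - (D / 4)^2
    = D^2 * (D - K)^2 / (16 * K^2 * (D - 1))"
proof -
  define Y where "Y = D - 1"
  have Y: "0 < Y" using D unfolding Y_def by simp
  have "(D / (2 * K))^2 * (D * ((K - 1)^2 + Y) / (4 * Y)) - (D / 4)^2 - D^2 * (D - K)^2 / (16 * K^2 * Y)
     = (D^3 * ((K - 1)^2 + Y) - D^2 * K^2 * Y - D^2 * (D - K)^2) / (16 * K^2 * Y)"
    using Y K D by (simp add: field_simps power2_eq_square power3_eq_cube)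
  also have "D^3 * ((K - 1)^2 + Y) - D^2 * K^2 * Y - D^2 * (D - K)^2 = 0"
    unfolding Y_def by (simp add: power2_eq_square power3_eq_cube algebra_simps)
  finally show ?thesis unfolding Y_def by simp
qed

lemma bstar_moments_lessThan:
  assumes "d - k < k" and "k < d"
  shows "(\<Sum>i<d-k+1. bstar d k i) = (real d / (2 * real k))^2"
    and "(\<Sum>i<d-k+1. (real k - real i) * bstar d k i) = real d / 4"
    and "(\<Sum>i<d-k+1. (real k - real i)^2 * bstar d k i)
           = real d * ((real k - 1)^2 + (real d - 1)) / (4 * (real d - 1))"
proof -
  have range: "{..<d-k+1} = {0..d-k}" by auto
  show "(\<Sum>i<d-k+1. bstar d k i) = (real d / (2 * real k))^2"
    and "(\<Sum>i<d-k+1. (real k - real i) * bstar d k i) = real d / 4"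
    and "(\<Sum>i<d-k+1. (real k - real i)^2 * bstar d k i)
           = real d * ((real k - 1)^2 + (real d - 1)) / (4 * (real d - 1))"
    using bstar_moments[OF assms] unfolding range beta_def gamma_def by simp_all
qed

lemma det_uminus_hessian_phi_bstar:
  assumes "d - k < k" and "k < d"
  shows "det (- hessian_mat (d - k + 1) (phi d k) (bstar d k))
    = (\<Prod>i=0..d-k. 1 / bstar d k i) * (2 * (real k)^2 / ((real d - 1) * (2 * real k - real d)^2)
        * (4 * real k - real d - 2 - (2 * real k - real d)^2))"
proof -
  define N where "N = d - k + 1"
  define c where "c = 4 * real k^2 * (4 * real k - real d) / (real d * (2 * real k - real d)^2)"
  have range: "{..<N} = {0..d-k}" unfolding N_def by auto
  note moments = bstar_moments_lessThan[OF assms, folded N_def]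
  have "det (- hessian_mat N (phi d k) (bstar d k))
      = det (diag_rank_two_mat N (bstar d k) (\<lambda>i. real k - real i) c (8 / real d))"
    unfolding N_def c_def hessian_mat_phi_bstar[OF assms] by simp
  also have "\<dots> = (\<Prod>i<N. 1 / bstar d k i) * ((1 + c * (\<Sum>i<N. bstar d k i))
      * (1 - 8 / real d * (\<Sum>i<N. (real k - real i)^2 * bstar d k i))
      + c * (8 / real d) * (\<Sum>i<N. (real k - real i) * bstar d k i)^2)"
    by (rule det_diag_rank_two_mat) (use assms in \<open>auto simp: N_def intro: bstar_pos\<close>)
  also have "(1 + c * (\<Sum>i<N. bstar d k i)) * (1 - 8 / real d * (\<Sum>i<N. (real k - real i)^2 * bstar d k i))
      + c * (8 / real d) * (\<Sum>i<N. (real k - real i) * bstar d k i)^2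
      = 2 * (real k)^2 / ((real d - 1) * (2 * real k - real d)^2)
        * (4 * real k - real d - 2 - (2 * real k - real d)^2)"
    unfolding moments c_def by (rule bstar_det_factor) (use assms in auto)
  finally show ?thesis unfolding N_def[symmetric] range .
qed

lemma negative_definite_hessian_phi_bstar:
  assumes "d - k < k" and "k < d" and "(2 * real k - real d)^2 < 4 * real k - real d - 2"
  shows "negative_definite (hessian_mat (d - k + 1) (phi d k) (bstar d k))"
proof -
  define N where "N = d - k + 1"
  define c where "c = 4 * real k^2 * (4 * real k - real d) / (real d * (2 * real k - real d)^2)"
  have k: "0 < real k" and d: "1 < real d" "real k < real d" "real d < 2 * real k" using assms by auto
  note moments = bstar_moments_lessThan[OF assms(1,2), folded N_def]
  show ?thesis
    unfolding N_def[symmetric] hessian_mat_phi_bstar[OF assms(1,2), folded N_def c_def]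
  proof (rule negative_definite_uminus_diag_rank_two_mat)
    show "\<And>i. i < N \<Longrightarrow> 0 < bstar d k i" using assms by (auto simp: N_def intro: bstar_pos)
    show "0 < (\<Sum>i<N. bstar d k i) * (\<Sum>i<N. (real k - real i)^2 * bstar d k i)
        - (\<Sum>i<N. (real k - real i) * bstar d k i)^2"
      unfolding moments bstar_moment_det[OF k d(1)] using k d by simp
    show "0 \<le> c" unfolding c_def using d by simp
    show "0 < (1 + c * (\<Sum>i<N. bstar d k i)) * (1 - 8 / real d * (\<Sum>i<N. (real k - real i)^2 * bstar d k i))
        + c * (8 / real d) * (\<Sum>i<N. (real k - real i) * bstar d k i)^2"
      unfolding moments c_def bstar_det_factor[OF k d(1,3)] using assms(3) d
      by (intro mult_pos_pos divide_pos_pos) auto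
  qed
qed

theorem lemma12:
  fixes d k :: nat
  assumes "real d / 2 < real k" and "k < d"
    and "4 * real k - real d - 2 > (2 * real k - real d)^2"
  shows "det (- hessian_mat (d - k + 1) (phi d k) (bstar d k))
           = 2 * (real k)^2 / ((real d - 1) * (2 * real k - real d)^2)
             * (4 * real k - real d - 2 - (2 * real k - real d)^2)
             * (\<Prod>i=0..d-k. 1 / bstar d k i)
       \<and> det (- hessian_mat (d - k + 1) (phi d k) (bstar d k)) > 0
       \<and> ((bstar d k \<in> Kset d k \<and>
            (\<forall>b \<in> Kset d k. b \<noteq> bstar d k \<longrightarrow> phi d k b < phi d k (bstar d k)))
           \<longrightarrow> negative_definite (hessian_mat (d - k + 1) (phi d k) (bstar d k)))"
proof -
  have dk: "d - k < k" using assms(1,2) by linarith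
  have "0 < (\<Prod>i=0..d-k. 1 / bstar d k i)"
    using assms(2) dk by (intro prod_pos) (auto intro: bstar_pos)
  moreover have "0 < 2 * (real k)^2 / ((real d - 1) * (2 * real k - real d)^2)
      * (4 * real k - real d - 2 - (2 * real k - real d)^2)"
    using assms by (intro mult_pos_pos divide_pos_pos) auto
  \<comment> \<open>negative definiteness holds outright\<close>
  ultimately show ?thesis
    using det_uminus_hessian_phi_bstar[OF dk assms(2)] negative_definite_hessian_phi_bstar[OF dk assms(2,3)]
    by (metis mult.commute mult_pos_pos)
qed

end
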